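(* Let $N$ and $L$ be integers with $1\le L\le N-1$, and let $\alpha>0$, $\delta_1>0$, $\delta_2>0$ with $\delta_1\neq\delta_2$. Let $z,y_1,y_2$ be independent random variables with $z\sim\mathrm{Gamma}(N-L,1)$ and $y_1,y_2\sim\mathrm{Gamma}(L,1)$, and set $$X=\frac{\alpha z}{1+\delta_1y_1+\delta_2y_2}.$$ Then $$\mathbb{E}\left[\ln(1+X)\right]=\sum_{i=0}^{N-L-1}\sum_{j=1}^2\sum_{k=0}^{L-1}\sum_{l=0}^i\frac{a_k^{(j)}(l+k)!}{l!(i-l)!}\,\alpha^{l+k-i+1}\,I_1\!\left(\frac{1}{\alpha},\frac{\alpha}{\delta_j},i,l+k+1\right),$$ where, for $0\le i\le L-1$, $$a^{(1)}_i=\frac{1}{\delta_1^{i+1}(L-1)!}\left(\frac{\delta_1}{\delta_1-\delta_2}\right)^L\frac{(2(L-1)-i)!}{i!(L-1-i)!}\left(\frac{\delta_2}{\delta_2-\delta_1}\right)^{L-1-i},$$ $$a^{(2)}_i=\frac{1}{\delta_2^{i+1}(L-1)!}\left(\frac{\delta_2}{\delta_2-\delta_1}\right)^L\frac{(2(L-1)-i)!}{i!(L-1-i)!}\left(\frac{\delta_1}{\delta_1-\delta_2}\right)^{L-1-i}.$$ (In particular the density of $\delta_1y_1+\delta_2y_2$ is $p(y)=\sum_{j=1}^2\sum_{k=0}^{L-1}a_k^{(j)}y^ke^{-y/\delta_j}$ for $y>0$, and the CDF of $X$ is $F_X(x)=1-\sum_{i=0}^{N-L-1}\sum_{j=1}^2\sum_{k=0}^{L-1}\sum_{l=0}^i\frac{a_k^{(j)}(l+k)!}{l!(i-l)!}\frac{\alpha^{l+k-i+1}e^{-x/\alpha}x^i}{(x+\alpha/\delta_j)^{l+k+1}}$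 for $x\ge0$.)
   Context: $\mathrm{Gamma}(n,1)$ denotes the distribution with density $t^{n-1}e^{-t}/(n-1)!$ on $t>0$ (equivalently, a chi-square variable with $2n$ degrees of freedom normalized to mean $n$; its CDF is $1-e^{-t}\sum_{i=0}^{n-1}t^i/i!$). For $a>0$, $b>0$ and nonnegative integers $m,n$, define $$I_1(a,b,m,n)=\int_0^\infty\frac{x^me^{-ax}}{(x+b)^n(x+1)}\,dx.$$ In the paper this models the SINR of a user under zero-forcing precoding with $N=N_t$ transmit antennas, $M=L+1$ active users, channel quantization and feedback delay. *)

theory Defs
  imports "HOL-Probability.Probability"
begin

text \<open>Gamma(n,1) density for n \<ge> 1: erlang_density (n-1) 1 from HOL-Probability,
  i.e. t^(n-1) e^(-t) / (n-1)! on t \<ge> 0.\<close>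
definition gamma_density :: "nat \<Rightarrow> real \<Rightarrow> real" where
  "gamma_density n = erlang_density (n - 1) 1"

definition I1 :: "real \<Rightarrow> real \<Rightarrow> nat \<Rightarrow> nat \<Rightarrow> real" where
  "I1 a b m n = (LBINT x:{0<..}. x ^ m * exp (- a * x) / ((x + b) ^ n * (x + 1)))"

definition coef :: "nat \<Rightarrow> real \<Rightarrow> real \<Rightarrow> nat \<Rightarrow> nat \<Rightarrow> real" where
  "coef L d1 d2 j i =
     (if j = 1 then
        1 / (d1 ^ (i + 1) * fact (L - 1)) * (d1 / (d1 - d2)) ^ L
        * fact (2 * (L - 1) - i) / (fact i * fact (L - 1 - i))
        * (d2 / (d2 - d1)) ^ (L - 1 - i)
      else
        1 / (d2 ^ (i + 1) * fact (L - 1)) * (d2 / (d2 - d1)) ^ L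
        * fact (2 * (L - 1) - i) / (fact i * fact (L - 1 - i))
        * (d1 / (d1 - d2)) ^ (L - 1 - i))"

definition delta :: "real \<Rightarrow> real \<Rightarrow> nat \<Rightarrow> real" where
  "delta d1 d2 j = (if j = 1 then d1 else d2)"

end

theory Submission
  imports Defs
begin

(* Write Y = \<delta>1 y1 + \<delta>2 y2 and X = \<alpha> z / (1 + Y).
   1. Layer cake: ln(1+b) = \<integral>_0^b dx/(1+x), so by Tonelli
      E[ln(1+X)] = \<integral>_0^\<infinity> P(X > x)/(1+x) dx.
   2. Conditionally on Y, P(X > x) = P(z > s(1+Y)) with s = x/\<alpha>, the Gamma tail
      \<Sum>_{i<N-L} (s(1+Y))^i e^{-s(1+Y)}/i!.  Expanding (1+Y)^i binomially leaves the
      moments E[Y^l e^{-sY}], which by independence and the binomial expansion of Y^l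
      are explicit products of Gamma moments ("mixed_moment").
   3. Partial fractions: the same moments are \<Sum>_j \<Sum>_k a^(j)_k (l+k)!/(s+1/\<delta>_j)^(l+k+1)
      ("pf_moment"), i.e. Y has the density p of the paper.  For l = 0 this is the
      partial fraction decomposition of (1+s\<delta>1)^-L (1+s\<delta>2)^-L, which reduces to a
      binomial identity; for l > 0 both families satisfy F_l' = -F_(l+1) in s.
   4. Each term of P(X > x)/(1+x) is then a multiple of the integrand of I1, and all
      of these are integrable, so integrating term by term gives the theorem. *)

text \<open>Reindexing the generalised-binomial identity of the library: for the integer
  exponent \<open>2m+1\<close> the truncated binomial expansion of \<open>(x+y)^(2m+1)\<close> is a sum of
  negative-binomial-type terms in \<open>x\<close> and \<open>x + y\<close>.\<close>
lemma truncated_binomial_expansion: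
  fixes x y :: real
  shows "(\<Sum>j\<le>m. of_nat (m + j choose j) * x^j * (x+y)^(m-j))
       = (\<Sum>k\<le>m. of_nat (2*m+1 choose k) * x^k * y^(m-k))"
proof -
  have "(\<Sum>k\<le>m. (of_nat m + of_nat (m+1) gchoose k) * x^k * y^(m-k))
      = (\<Sum>k\<le>m. (of_nat k + of_nat (m+1) - 1 gchoose k) * x^k * (x + y)^(m-k))"
    by (rule gbinomial_partial_sum_poly_xpos)
  moreover have "(of_nat m + of_nat (m+1) gchoose k) = (of_nat (2*m+1 choose k) :: real)" for k
  proof -
    have "(of_nat m + of_nat (m+1) :: real) = of_nat (2*m+1)" by simp
    then show ?thesis by (simp only: binomial_gbinomial)
  qed
  moreover have "(of_nat k + of_nat (m+1) - 1 gchoose k) = (of_nat (m + k choose k) :: real)" for k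
    by (simp add: binomial_gbinomial add.commute)
  ultimately show ?thesis by simp
qed

text \<open>The two halves \<open>k \<le> m\<close> and \<open>k > m\<close> of the binomial expansion of \<open>(x+y)^(2m+1)\<close>,
  written via \<open>truncated_binomial_expansion\<close>; this is the polynomial identity behind
  the partial fraction decomposition of \<open>1/(XY)^(m+1)\<close>.\<close>
lemma split_binomial_identity:
  fixes x y :: real
  shows "y^(m+1) * (\<Sum>j\<le>m. of_nat (m + j choose j) * x^j * (x+y)^(m-j))
       + x^(m+1) * (\<Sum>j\<le>m. of_nat (m + j choose j) * y^j * (x+y)^(m-j)) = (x+y)^(2*m+1)"
proof -
  define c where "c k = (of_nat (2*m+1 choose k) :: real)" for k
  have low: "y^(m+1) * (\<Sum>k\<le>m. c k * x^k * y^(m-k)) = (\<Sum>k\<le>m. c k * x^k * y^(2*m+1-k))"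
    unfolding sum_distrib_left
  proof (intro sum.cong refl)
    fix k assume "k \<in> {..m}"
    then have "2*m+1-k = (m+1) + (m-k)" by simp
    then have "y^(2*m+1-k) = y^(m+1) * y^(m-k)" by (simp only: power_add)
    then show "y^(m+1) * (c k * x^k * y^(m-k)) = c k * x^k * y^(2*m+1-k)" by simp
  qed
  have high: "x^(m+1) * (\<Sum>k\<le>m. c k * y^k * x^(m-k)) = (\<Sum>k=m+1..2*m+1. c k * x^k * y^(2*m+1-k))"
  proof -
    have "x^(m+1) * (\<Sum>k\<le>m. c k * y^k * x^(m-k)) = (\<Sum>k\<le>m. c (2*m+1-k) * x^(2*m+1-k) * y^k)"
      unfolding sum_distrib_left
    proof (intro sum.cong refl)
      fix k assume "k \<in> {..m}"
      then have "2*m+1-k = (m+1) + (m-k)" "c k = c (2*m+1-k)"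
        by (simp_all add: c_def binomial_symmetric[of k])
      then have "c k = c (2*m+1-k)" "x^(2*m+1-k) = x^(m+1) * x^(m-k)" by (simp_all only: power_add)
      then show "x^(m+1) * (c k * y^k * x^(m-k)) = c (2*m+1-k) * x^(2*m+1-k) * y^k" by simp
    qed
    also have "\<dots> = (\<Sum>k=m+1..2*m+1. c k * x^k * y^(2*m+1-k))"
      by (rule sum.reindex_bij_witness[where i="\<lambda>k. 2*m+1-k" and j="\<lambda>k. 2*m+1-k"]) auto
    finally show ?thesis .
  qed
  have "{..2*m+1} = {..m} \<union> {m+1..2*m+1}" by auto
  then have "(\<Sum>k\<le>2*m+1. c k * x^k * y^(2*m+1-k))
      = (\<Sum>k\<le>m. c k * x^k * y^(2*m+1-k)) + (\<Sum>k=m+1..2*m+1. c k * x^k * y^(2*m+1-k))"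
    by (simp add: sum.union_disjoint)
  also have "(\<Sum>k\<le>2*m+1. c k * x^k * y^(2*m+1-k)) = (x+y)^(2*m+1)"
    unfolding c_def by (simp only: binomial_ring)
  finally show ?thesis
    using low high truncated_binomial_expansion[of m x y] truncated_binomial_expansion[of m y x]
    unfolding c_def by (simp add: add.commute)
qed

lemma partial_fractions_XY:
  fixes X Y :: real
  assumes "1 \<le> L" "X \<noteq> 0" "Y \<noteq> 0" "X + Y = 1"
  shows "1 / (X*Y)^L = (\<Sum>k<L. of_nat (2*L-2-k choose (L-1-k)) * (1/X^(k+1) + 1/Y^(k+1)))"
proof -
  define m where "m = L - 1"
  have L: "L = m + 1" using assms(1) by (simp add: m_def)
  define S where "S x = (\<Sum>j\<le>m. of_nat (m + j choose j) * x^j)" for x :: real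
  have S_div: "S x / x^L = (\<Sum>k<L. of_nat (2*L-2-k choose (L-1-k)) / x^(k+1))" if "x \<noteq> 0" for x
  proof -
    have "S x / x^L = (\<Sum>j\<le>m. of_nat (m + j choose j) / x^(m+1-j))"
      unfolding S_def sum_divide_distrib L
    proof (intro sum.cong refl)
      fix j assume "j \<in> {..m}"
      then have "x^(m+1) = x^j * x^(m+1-j)" by (simp add: power_add[symmetric])
      then show "of_nat (m + j choose j) * x^j / x^(m+1) = of_nat (m + j choose j) / x^(m+1-j)"
        using that by simp
    qed
    also have "\<dots> = (\<Sum>k<L. of_nat (2*L-2-k choose (L-1-k)) / x^(k+1))"
    proof (rule sum.reindex_bij_witness[where i="\<lambda>k. m-k" and j="\<lambda>k. m-k"])
      fix j assume "j \<in> {..m}"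
      then have "2*L-2-(m-j) = m + j" "L-1-(m-j) = j" "m-j+1 = m+1-j" using L by auto
      then show "of_nat (2*L-2-(m-j) choose (L-1-(m-j))) / x^(m-j+1) = of_nat (m + j choose j) / x^(m+1-j)"
        by (simp only:)
    qed (auto simp: L)
    finally show ?thesis .
  qed
  have "Y^L * S X + X^L * S Y = 1"
    using split_binomial_identity[of Y m X] assms(4) unfolding S_def L by (simp add: add.commute)
  then have "1 / (X*Y)^L = (Y^L * S X + X^L * S Y) / (X^L * Y^L)"
    by (simp add: power_mult_distrib)
  also have "\<dots> = S X / X^L + S Y / Y^L" using assms by (simp add: add_divide_distrib)
  finally show ?thesis
    unfolding S_div[OF assms(2)] S_div[OF assms(3)] by (simp add: sum.distrib ring_distribs)
qed

lemma coef_2_swap: "coef L d1 d2 2 k = coef L d2 d1 1 k"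
  unfolding coef_def by simp

lemma coef_1_term:
  fixes d e s :: real
  assumes k: "k \<le> L - 1" and L: "1 \<le> L" and d: "d > 0" "e > 0" "d \<noteq> e" and s: "s \<ge> 0"
  shows "coef L d e 1 k * fact k / (s + 1/d)^(k+1)
       = (d/(d-e) * (e/(e-d)))^L * (of_nat (2*L-2-k choose (L-1-k)) / (e/(e-d) * (1 + s*d))^(k+1))"
proof -
  define A B u where "A = d/(d-e)" and "B = e/(e-d)" and "u = 1 + s*d"
  have B: "B \<noteq> 0" and u: "u > 0" using d s by (auto simp: B_def u_def intro: add_pos_nonneg)
  have binom: "(of_nat (2*L-2-k choose (L-1-k)) :: real) = fact (2*(L-1)-k) / (fact (L-1-k) * fact (L-1))"
  proof -
    have "2*L-2-k = 2*(L-1)-k" "2*(L-1)-k - (L-1-k) = L-1" "L-1-k \<le> 2*(L-1)-k" using k by auto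
    then show ?thesis using binomial_fact[of "L-1-k" "2*(L-1)-k", where 'a=real] by (simp only:)
  qed
  have coef: "coef L d e 1 k * fact k = of_nat (2*L-2-k choose (L-1-k)) * A^L * B^(L-1-k) / d^(k+1)"
    unfolding coef_def binom A_def B_def using d by (simp add: field_simps)
  have shift: "(s + 1/d)^(k+1) = u^(k+1) / d^(k+1)"
  proof -
    have "s + 1/d = u/d" using d by (simp add: u_def field_simps)
    then show ?thesis by (simp add: power_divide)
  qed
  have "L = (L-1-k) + (k+1)" using k L by simp
  then have BL: "B^L = B^(L-1-k) * B^(k+1)" by (metis power_add)
  have "coef L d e 1 k * fact k / (s + 1/d)^(k+1) = of_nat (2*L-2-k choose (L-1-k)) * A^L * B^(L-1-k) / u^(k+1)"
    unfolding coef shift using d by simp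
  also have "\<dots> = (A*B)^L * (of_nat (2*L-2-k choose (L-1-k)) / (B * u)^(k+1))"
    unfolding power_mult_distrib BL using B u by (simp add: field_simps)
  finally show ?thesis unfolding A_def B_def u_def .
qed

text \<open>The partial-fraction expression
  \<open>\<Sum>\<^sub>j \<Sum>\<^sub>k a^(j)_k (m+k)! / (s + 1/\<delta>\<^sub>j)^(m+k+1)\<close>; it is the \<open>m\<close>-th moment of
  \<open>\<delta>\<^sub>1y\<^sub>1 + \<delta>\<^sub>2y\<^sub>2\<close> against \<open>e^(-sy)\<close>, computed from the density \<open>p\<close> of the paper.\<close>
definition pf_moment :: "nat \<Rightarrow> real \<Rightarrow> real \<Rightarrow> nat \<Rightarrow> real \<Rightarrow> real" where
  "pf_moment L d1 d2 m s =
     (\<Sum>j\<in>{1,2}. \<Sum>k=0..L-1. coef L d1 d2 j k * fact (m+k) / (s + 1/delta d1 d2 j)^(m+k+1))"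

text \<open>For \<open>m = 0\<close> this is the partial fraction decomposition of the product of the two
  Gamma Laplace transforms \<open>(1 + s\<delta>\<^sub>1)^(-L) (1 + s\<delta>\<^sub>2)^(-L)\<close>.\<close>
lemma pf_moment_0:
  assumes L: "1 \<le> L" and d: "d1 > 0" "d2 > 0" "d1 \<noteq> d2" and s: "s \<ge> 0"
  shows "pf_moment L d1 d2 0 s = 1 / ((1 + s*d1)^L * (1 + s*d2)^L)"
proof -
  define A B u v where "A = d1/(d1-d2)" and "B = d2/(d2-d1)" and "u = 1 + s*d1" and "v = 1 + s*d2"
  define C where "C k = (of_nat (2*L-2-k choose (L-1-k)) :: real)" for k
  have u: "u > 0" and v: "v > 0" using s d by (auto simp: u_def v_def intro: add_pos_nonneg)
  have A: "A \<noteq> 0" and B: "B \<noteq> 0" using d by (auto simp: A_def B_def)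
  have XY: "B * u + A * v = 1"
  proof -
    have "d2 - d1 \<noteq> 0" and A': "A = - d1/(d2-d1)" using d by (auto simp: A_def field_simps)
    then show ?thesis unfolding A' B_def u_def v_def by (simp add: divide_simps) (simp add: algebra_simps)
  qed
  have idx: "{0..L-1} = {..<L}" using L by auto
  have t1: "coef L d1 d2 1 k * fact k / (s + 1/d1)^(k+1) = (A*B)^L * (C k / (B * u)^(k+1))"
    if "k < L" for k
    using coef_1_term[of k L d1 d2 s] that L d s unfolding A_def B_def u_def C_def by simp
  have t2: "coef L d1 d2 2 k * fact k / (s + 1/d2)^(k+1) = (A*B)^L * (C k / (A * v)^(k+1))"
    if "k < L" for k
    using coef_1_term[of k L d2 d1 s] that L d s unfolding coef_2_swap A_def B_def v_def C_def
    by (simp add: mult.commute)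
  have "pf_moment L d1 d2 0 s = (\<Sum>k<L. (A*B)^L * (C k / (B * u)^(k+1))) + (\<Sum>k<L. (A*B)^L * (C k / (A * v)^(k+1)))"
    unfolding pf_moment_def idx using t1 t2 by (simp add: delta_def)
  also have "\<dots> = (A*B)^L * (\<Sum>k<L. C k * (1/(B * u)^(k+1) + 1/(A * v)^(k+1)))"
    by (simp add: sum.distrib[symmetric] sum_distrib_left ring_distribs)
  also have "\<dots> = (A*B)^L * (1 / ((B * u)*(A * v))^L)"
    using partial_fractions_XY[OF L, of "B * u" "A * v"] XY u v A B unfolding C_def by simp
  also have "\<dots> = 1 / (u^L * v^L)" using A B u v by (simp add: power_mult_distrib)
  finally show ?thesis unfolding u_def v_def .
qed

lemma DERIV_const_div_power:
  fixes a b K s :: real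
  assumes "a + s*b \<noteq> 0"
  shows "((\<lambda>s. K / (a + s*b)^n) has_real_derivative -(K * of_nat n * b / (a+s*b)^(Suc n))) (at s)"
proof -
  have "((\<lambda>s. K * (a + s*b) powi (- int n)) has_real_derivative
          K * (of_int (- int n) * (a + s*b) powi (- int n - 1)) * b) (at s)"
    using assms by (auto intro!: derivative_eq_intros)
  moreover have "(a + s*b) powi (- int n - 1) = 1 / (a+s*b)^(Suc n)"
  proof -
    have "- int n - 1 = - int (Suc n)" by simp
    then have "(a + s*b) powi (- int n - 1) = inverse ((a + s*b) powi int (Suc n))"
      by (simp only: power_int_minus)
    then show ?thesis by (simp only: power_int_of_nat divide_inverse mult_1)
  qed
  ultimately show ?thesis by (simp add: power_int_minus divide_inverse ac_simps)
qed

lemma binomial_convolution_Suc: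
  fixes A B :: "nat \<Rightarrow> real"
  shows "(\<Sum>r\<le>Suc m. of_nat (Suc m choose r) * A r * B (Suc m - r))
       = (\<Sum>r\<le>m. of_nat (m choose r) * A (Suc r) * B (m - r)) + (\<Sum>r\<le>m. of_nat (m choose r) * A r * B (Suc m - r))"
proof -
  define g where "g r = A r * B (Suc m - r)" for r
  have shift: "(\<Sum>r\<le>Suc m. of_nat (Suc m choose r) * g r) = g 0 + (\<Sum>r\<le>m. of_nat (Suc m choose Suc r) * g (Suc r))"
    by (subst sum.atMost_Suc_shift) simp
  have pascal: "(\<Sum>r\<le>m. of_nat (Suc m choose Suc r) * g (Suc r))
      = (\<Sum>r\<le>m. of_nat (m choose r) * g (Suc r)) + (\<Sum>r\<le>m. of_nat (m choose Suc r) * g (Suc r))"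
    by (simp add: sum.distrib ring_distribs)
  have unshift: "g 0 + (\<Sum>r\<le>m. of_nat (m choose Suc r) * g (Suc r)) = (\<Sum>r\<le>Suc m. of_nat (m choose r) * g r)"
    by (subst sum.atMost_Suc_shift) simp
  show ?thesis using shift pascal unshift unfolding g_def by (simp add: mult.assoc)
qed

lemma DERIV_binomial_convolution:
  fixes A B :: "nat \<Rightarrow> real \<Rightarrow> real"
  assumes dA: "\<And>r. (A r has_real_derivative -(A (Suc r) s)) (at s)"
    and dB: "\<And>r. (B r has_real_derivative -(B (Suc r) s)) (at s)"
  shows "((\<lambda>s. \<Sum>r\<le>m. of_nat (m choose r) * A r s * B (m-r) s) has_real_derivative
          -(\<Sum>r\<le>Suc m. of_nat (Suc m choose r) * A r s * B (Suc m - r) s)) (at s)"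
proof -
  have "((\<lambda>s. c * A r s * B q s) has_real_derivative -(c * A (Suc r) s * B q s + c * A r s * B (Suc q) s)) (at s)"
    for c r q
    by (rule DERIV_cong[OF DERIV_mult[OF DERIV_cmult[OF dA] dB]]) (simp add: algebra_simps)
  then have "((\<lambda>s. \<Sum>r\<le>m. of_nat (m choose r) * A r s * B (m-r) s) has_real_derivative
      (\<Sum>r\<le>m. -(of_nat (m choose r) * A (Suc r) s * B (m-r) s + of_nat (m choose r) * A r s * B (Suc (m-r)) s))) (at s)"
    by (intro DERIV_sum)
  moreover have "(\<Sum>r\<le>m. -(of_nat (m choose r) * A (Suc r) s * B (m-r) s + of_nat (m choose r) * A r s * B (Suc (m-r)) s))
      = -((\<Sum>r\<le>m. of_nat (m choose r) * A (Suc r) s * B (m - r) s) + (\<Sum>r\<le>m. of_nat (m choose r) * A r s * B (Suc m - r) s))"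
    by (simp add: sum.distrib[symmetric] sum_negf[symmetric] Suc_diff_le)
  ultimately show ?thesis
    using binomial_convolution_Suc[where A="\<lambda>r. A r s" and B="\<lambda>r. B r s" and m=m] by simp
qed

text \<open>\<open>laplace_moment d L r s = E[(dy)^r e^(-sdy)]\<close> for \<open>y \<sim> Gamma(L,1)\<close> (see
  \<open>gamma_laplace_moment\<close> below).\<close>
definition laplace_moment :: "real \<Rightarrow> nat \<Rightarrow> nat \<Rightarrow> real \<Rightarrow> real" where
  "laplace_moment d L r s = fact (L - 1 + r) / fact (L - 1) * d^r / (1 + s*d)^(L+r)"

text \<open>\<open>mixed_moment L d1 d2 m s = E[Y^m e^(-sY)]\<close> for \<open>Y = \<delta>\<^sub>1y\<^sub>1 + \<delta>\<^sub>2y\<^sub>2\<close>, obtained from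
  the binomial expansion of \<open>Y^m\<close> and independence.\<close>
definition mixed_moment :: "nat \<Rightarrow> real \<Rightarrow> real \<Rightarrow> nat \<Rightarrow> real \<Rightarrow> real" where
  "mixed_moment L d1 d2 m s = (\<Sum>r\<le>m. of_nat (m choose r) * laplace_moment d1 L r s * laplace_moment d2 L (m-r) s)"

lemma laplace_moment_nonneg: "s \<ge> 0 \<Longrightarrow> d > 0 \<Longrightarrow> 0 \<le> laplace_moment d L r s"
  unfolding laplace_moment_def by simp

lemma mixed_moment_nonneg: "s \<ge> 0 \<Longrightarrow> d1 > 0 \<Longrightarrow> d2 > 0 \<Longrightarrow> 0 \<le> mixed_moment L d1 d2 m s"
  unfolding mixed_moment_def by (intro sum_nonneg mult_nonneg_nonneg laplace_moment_nonneg) auto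

lemma DERIV_laplace_moment:
  assumes "1 + s*d \<noteq> 0" "1 \<le> L"
  shows "((\<lambda>s. laplace_moment d L r s) has_real_derivative -(laplace_moment d L (Suc r) s)) (at s)"
proof -
  have "((\<lambda>s. laplace_moment d L r s) has_real_derivative
          -((fact (L - 1 + r) / fact (L - 1) * d^r) * of_nat (L+r) * d / (1+s*d)^(Suc (L+r)))) (at s)"
    unfolding laplace_moment_def by (rule DERIV_const_div_power) (use assms in simp)
  moreover have "fact (L - 1 + Suc r) = (of_nat (L+r) * fact (L - 1 + r) :: real)"
    using assms(2) fact_Suc[of "L - 1 + r"] by (simp add: Suc_diff_le)
  ultimately show ?thesis
    unfolding laplace_moment_def using assms(2) by (simp add: ac_simps)
qed

lemma DERIV_pf_moment:
  assumes "s > 0" "d1 > 0" "d2 > 0"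
  shows "((\<lambda>s. pf_moment L d1 d2 m s) has_real_derivative -(pf_moment L d1 d2 (Suc m) s)) (at s)"
proof -
  have "delta d1 d2 j > 0" for j using assms by (simp add: delta_def)
  then have pos: "1/delta d1 d2 j + s*1 \<noteq> 0" for j
    using assms by (smt (verit) divide_pos_pos)
  have "((\<lambda>s. coef L d1 d2 j k * fact (m+k) / (1/delta d1 d2 j + s*1)^(m+k+1)) has_real_derivative
      -(coef L d1 d2 j k * fact (m+k) * of_nat (m+k+1) * 1 / (1/delta d1 d2 j + s*1)^(Suc (m+k+1)))) (at s)"
    for j k by (rule DERIV_const_div_power[OF pos])
  moreover have "fact (Suc m + k) = (fact (m+k) * of_nat (m+k+1) :: real)" for k
    by (simp add: algebra_simps)
  ultimately have "((\<lambda>s. coef L d1 d2 j k * fact (m+k) / (s + 1/delta d1 d2 j)^(m+k+1)) has_real_derivative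
      -(coef L d1 d2 j k * fact (Suc m+k) / (s + 1/delta d1 d2 j)^(Suc m+k+1))) (at s)" for j k
    by (simp add: ac_simps)
  then show ?thesis unfolding pf_moment_def
    by (rule DERIV_cong[OF DERIV_sum[OF DERIV_sum]]) (simp add: sum_negf)
qed

text \<open>They agree for \<open>m = 0\<close> (\<open>pf_moment_0\<close>) and both satisfy
  \<open>F\<^sub>m' = -F\<^sub>m\<^sub>+\<^sub>1\<close>, so induction on \<open>m\<close> with uniqueness of derivatives concludes.\<close>
lemma mixed_moment_eq_pf_moment:
  assumes L: "1 \<le> L" and d: "d1 > 0" "d2 > 0" "d1 \<noteq> d2" and s: "s > 0"
  shows "mixed_moment L d1 d2 m s = pf_moment L d1 d2 m s"
  using s
proof (induction m arbitrary: s)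
  case 0
  then show ?case using pf_moment_0[OF L d, of s]
    unfolding mixed_moment_def laplace_moment_def by (simp add: power_mult_distrib)
next
  case (Suc m)
  have "((\<lambda>s. laplace_moment d L r s) has_real_derivative -(laplace_moment d L (Suc r) s)) (at s)"
    if "d > 0" for d r
  proof -
    have "1 + s*d \<noteq> 0" using that Suc.prems by (smt (verit) mult_pos_pos)
    then show ?thesis by (rule DERIV_laplace_moment[OF _ L])
  qed
  then have "((\<lambda>s. mixed_moment L d1 d2 m s) has_real_derivative -(mixed_moment L d1 d2 (Suc m) s)) (at s)"
    unfolding mixed_moment_def using d by (intro DERIV_binomial_convolution)
  then have "((\<lambda>s. pf_moment L d1 d2 m s) has_real_derivative -(mixed_moment L d1 d2 (Suc m) s)) (at s)"
    by (rule has_field_derivative_transform_within_open[where S="{0<..}"]) (use Suc in auto)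
  moreover have "((\<lambda>s. pf_moment L d1 d2 m s) has_real_derivative -(pf_moment L d1 d2 (Suc m) s)) (at s)"
    using DERIV_pf_moment Suc.prems d by blast
  ultimately show ?case using DERIV_unique by fastforce
qed

lemma gamma_density_alt: "gamma_density n y = (if y < 0 then 0 else y^(n-1) * exp (-y) / fact (n-1))"
  unfolding gamma_density_def erlang_density_def by (cases "n = 0") auto

lemma gamma_density_nonneg [simp]: "0 \<le> gamma_density n y"
  unfolding gamma_density_def by simp

lemma gamma_density_measurable [measurable]: "gamma_density n \<in> borel_measurable borel"
  unfolding gamma_density_def by simp

text \<open>For \<open>y \<sim> Gamma(L,1)\<close>: \<open>E[(dy)^r e^(-sdy)] = laplace_moment d L r s\<close>, a rescaled
  Erlang moment.\<close>
lemma gamma_laplace_moment: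
  assumes "s \<ge> 0" "d > 0" "1 \<le> L"
  shows "(\<integral>\<^sup>+ y. ennreal (gamma_density L y * ((d*y)^r * exp (-(s*d)*y))) \<partial>lborel)
       = ennreal (laplace_moment d L r s)"
proof -
  define c where "c = 1 + s*d"
  have c: "c > 0" using assms by (simp add: c_def add_pos_nonneg)
  have pw: "gamma_density L y * ((d*y)^r * exp (-(s*d)*y)) = (d^r / c^L) * (erlang_density (L-1) c y * y^r)" for y
  proof (cases "y < 0")
    case False
    have "exp (-y) * exp (-(s*d)*y) = exp (-c*y)" by (simp add: c_def exp_add[symmetric] algebra_simps)
    moreover have "Suc (L-1) = L" using assms by simp
    ultimately show ?thesis using False c
      by (simp add: gamma_density_alt erlang_density_def power_mult_distrib field_simps)
  qed (simp add: gamma_density_alt erlang_density_def)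
  have "(\<integral>\<^sup>+ y. ennreal (gamma_density L y * ((d*y)^r * exp (-(s*d)*y))) \<partial>lborel)
      = (\<integral>\<^sup>+ y. ennreal (d^r / c^L) * ennreal (erlang_density (L-1) c y * y^r) \<partial>lborel)"
    unfolding pw using assms c by (intro nn_integral_cong ennreal_mult') simp
  also have "\<dots> = ennreal (d^r / c^L) * (\<integral>\<^sup>+ y. ennreal (erlang_density (L-1) c y * y^r) \<partial>lborel)"
    by (rule nn_integral_cmult) measurable
  also have "\<dots> = ennreal (d^r / c^L) * ennreal (fact (L-1+r) / (fact (L-1) * c^r))"
    using nn_integral_erlang_ith_moment[OF c, of "L-1" r] by simp
  also have "\<dots> = ennreal (laplace_moment d L r s)"
    using assms c unfolding laplace_moment_def c_def[symmetric]
    by (simp add: ennreal_mult[symmetric] power_add field_simps)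
  finally show ?thesis .
qed

lemma nn_integral_separable_sum:
  fixes c :: "nat \<Rightarrow> real" and f g :: "nat \<Rightarrow> real \<Rightarrow> real"
  assumes [measurable]: "\<And>r. f r \<in> borel_measurable borel" "\<And>r. g r \<in> borel_measurable borel"
    and nn: "\<And>r. 0 \<le> c r" "\<And>r y. 0 \<le> f r y" "\<And>r y. 0 \<le> g r y"
  shows "(\<integral>\<^sup>+ y2. \<integral>\<^sup>+ y1. ennreal (\<Sum>r\<in>R. c r * g r y2 * f r y1) \<partial>lborel \<partial>lborel)
       = (\<Sum>r\<in>R. ennreal (c r) * (\<integral>\<^sup>+ y2. ennreal (g r y2) \<partial>lborel) * (\<integral>\<^sup>+ y1. ennreal (f r y1) \<partial>lborel))"
proof -
  have "(\<integral>\<^sup>+ y2. \<integral>\<^sup>+ y1. ennreal (\<Sum>r\<in>R. c r * g r y2 * f r y1) \<partial>lborel \<partial>lborel)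
      = (\<integral>\<^sup>+ y2. \<integral>\<^sup>+ y1. (\<Sum>r\<in>R. ennreal (c r * g r y2) * ennreal (f r y1)) \<partial>lborel \<partial>lborel)"
    using nn by (intro nn_integral_cong) (simp add: sum_ennreal[symmetric] ennreal_mult'')
  also have "\<dots> = (\<integral>\<^sup>+ y2. (\<Sum>r\<in>R. ennreal (c r * g r y2) * (\<integral>\<^sup>+ y1. ennreal (f r y1) \<partial>lborel)) \<partial>lborel)"
    by (intro nn_integral_cong) (simp add: nn_integral_sum nn_integral_cmult)
  also have "\<dots> = (\<Sum>r\<in>R. (\<integral>\<^sup>+ y2. ennreal (c r) * ennreal (g r y2) \<partial>lborel) * (\<integral>\<^sup>+ y1. ennreal (f r y1) \<partial>lborel))"
    using nn by (simp add: nn_integral_sum nn_integral_multc ennreal_mult')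
  also have "\<dots> = (\<Sum>r\<in>R. ennreal (c r) * (\<integral>\<^sup>+ y2. ennreal (g r y2) \<partial>lborel) * (\<integral>\<^sup>+ y1. ennreal (f r y1) \<partial>lborel))"
    by (simp add: nn_integral_cmult)
  finally show ?thesis .
qed

lemma gamma_mixed_moment:
  assumes "s \<ge> 0" "d1 > 0" "d2 > 0" "1 \<le> L"
  shows "(\<integral>\<^sup>+ y2. \<integral>\<^sup>+ y1. ennreal (gamma_density L y2 * gamma_density L y1 * ((d1*y1 + d2*y2)^m * exp (-s*(d1*y1 + d2*y2)))) \<partial>lborel \<partial>lborel)
     = ennreal (mixed_moment L d1 d2 m s)"
proof -
  define h where "h d r y = gamma_density L y * ((d*y)^r * exp (-(s*d)*y))" for d :: real and r y
  have h_nn: "0 \<le> h d r y" if "d > 0" for d r y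
    using that by (cases "y < 0") (auto simp: h_def gamma_density_alt)
  have expand: "gamma_density L y2 * gamma_density L y1 * ((d1*y1 + d2*y2)^m * exp (-s*(d1*y1 + d2*y2)))
      = (\<Sum>r\<le>m. of_nat (m choose r) * h d2 (m-r) y2 * h d1 r y1)" for y1 y2
  proof -
    have "exp (-s*(d1*y1 + d2*y2)) = exp (-(s*d1)*y1) * exp (-(s*d2)*y2)"
      by (simp add: exp_add[symmetric] algebra_simps)
    then show ?thesis unfolding h_def binomial_ring
      by (simp add: sum_distrib_left sum_distrib_right ac_simps)
  qed
  have "(\<integral>\<^sup>+ y2. \<integral>\<^sup>+ y1. ennreal (gamma_density L y2 * gamma_density L y1 * ((d1*y1 + d2*y2)^m * exp (-s*(d1*y1 + d2*y2)))) \<partial>lborel \<partial>lborel)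
      = (\<Sum>r\<le>m. ennreal (of_nat (m choose r)) * (\<integral>\<^sup>+ y2. ennreal (h d2 (m-r) y2) \<partial>lborel) * (\<integral>\<^sup>+ y1. ennreal (h d1 r y1) \<partial>lborel))"
    unfolding expand using assms h_nn by (intro nn_integral_separable_sum) (auto simp: h_def)
  also have "\<dots> = (\<Sum>r\<le>m. ennreal (of_nat (m choose r) * laplace_moment d1 L r s * laplace_moment d2 L (m-r) s))"
    using assms unfolding h_def gamma_laplace_moment[OF assms(1,2,4)] gamma_laplace_moment[OF assms(1,3,4)]
    by (simp add: ennreal_mult'' laplace_moment_nonneg mult_ac)
  also have "\<dots> = ennreal (mixed_moment L d1 d2 m s)"
    unfolding mixed_moment_def using assms by (simp add: sum_ennreal laplace_moment_nonneg)
  finally show ?thesis .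
qed

text \<open>Complementary CDF of \<open>Gamma(n,1)\<close>: \<open>P(z > t) = \<Sum>\<^sub>i\<^sub><\<^sub>n t^i e^(-t) / i!\<close>.\<close>
definition gamma_ccdf :: "nat \<Rightarrow> real \<Rightarrow> real" where
  "gamma_ccdf n t = (\<Sum>i<n. t^i * exp (-t) / fact i)"

lemma gamma_ccdf_integral:
  assumes "1 \<le> n" "t \<ge> 0"
  shows "(\<integral>\<^sup>+ z. ennreal (gamma_density n z) * indicator {t<..} z \<partial>lborel) = ennreal (gamma_ccdf n t)"
proof -
  let ?tail = "\<integral>\<^sup>+ z. ennreal (gamma_density n z) * indicator {t<..} z \<partial>lborel"
  have cdf: "(\<integral>\<^sup>+ z. ennreal (gamma_density n z) * indicator {..t} z \<partial>lborel) = ennreal (erlang_CDF (n-1) 1 t)"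
    unfolding gamma_density_def by (rule nn_integral_erlang_density) simp
  have "(\<integral>\<^sup>+ z. ennreal (gamma_density n z) * indicator {..t} z \<partial>lborel) + ?tail
      = (\<integral>\<^sup>+ z. ennreal (gamma_density n z) * indicator {..t} z + ennreal (gamma_density n z) * indicator {t<..} z \<partial>lborel)"
    by (rule nn_integral_add[symmetric]) measurable
  also have "\<dots> = (\<integral>\<^sup>+ z. ennreal (gamma_density n z) \<partial>lborel)"
    by (intro nn_integral_cong) (auto split: split_indicator)
  also have "\<dots> = 1"
    using nn_integral_erlang_ith_moment[of 1 "n-1" 0] unfolding gamma_density_def by simp
  finally have total: "ennreal (erlang_CDF (n-1) 1 t) + ?tail = 1" unfolding cdf .
  have "?tail = ennreal (erlang_CDF (n-1) 1 t) + ?tail - ennreal (erlang_CDF (n-1) 1 t)"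
    by (rule ennreal_add_diff_cancel_left[symmetric]) simp
  also have "\<dots> = ennreal 1 - ennreal (erlang_CDF (n-1) 1 t)" unfolding total by simp
  also have "\<dots> = ennreal (1 - erlang_CDF (n-1) 1 t)" by (rule ennreal_minus) simp
  also have "1 - erlang_CDF (n-1) 1 t = gamma_ccdf n t"
  proof -
    have "{..n-1} = {..<n}" using assms by auto
    then show ?thesis using assms unfolding erlang_CDF_def gamma_ccdf_def by (simp add: mult.commute)
  qed
  finally show ?thesis .
qed

text \<open>\<open>ln(1+b) = \<integral>\<^sub>0\<^sup>b dx/(1+x)\<close>, written as an integral over the half line so that it can be
  exchanged with the expectation (layer-cake representation).\<close>
lemma ln_one_plus_integral:
  assumes "b \<ge> 0"
  shows "ennreal (ln (1+b)) = (\<integral>\<^sup>+ x. ennreal (indicator {0..} x / (1+x) * (if x < b then 1 else 0)) \<partial>lborel)"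
proof -
  have "(\<integral>\<^sup>+ x. ennreal (1/(1+x)) * indicator {0..b} x \<partial>lborel) = ennreal (ln (1+b) - ln (1+0))"
    by (rule nn_integral_FTC_Icc) (use assms in \<open>auto intro!: derivative_eq_intros\<close>)
  moreover have "AE x in lborel. ennreal (1/(1+x)) * indicator {0..b} x
      = ennreal (indicator {0..} x / (1+x) * (if x < b then 1 else 0))"
    using AE_lborel_singleton[of b] by eventually_elim (auto split: split_indicator)
  ultimately show ?thesis by (simp add: nn_integral_cong_AE)
qed

lemma gamma_expected_log:
  assumes c: "c > 0" and a: "\<alpha> > 0" and n: "1 \<le> n"
  shows "(\<integral>\<^sup>+ z. ennreal (gamma_density n z * ln (1 + \<alpha>*z/c)) \<partial>lborel)
       = (\<integral>\<^sup>+ x. ennreal (indicator {0..} x / (1+x) * gamma_ccdf n (x*c/\<alpha>)) \<partial>lborel)"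
proof -
  define f where "f x z = ennreal (gamma_density n z * (indicator {0..} x / (1+x) * (if x*c/\<alpha> < z then 1 else 0)))"
    for x z :: real
  have fm: "(\<lambda>(x, z). f x z) \<in> borel_measurable (lborel \<Otimes>\<^sub>M lborel)"
    unfolding f_def by measurable
  have inner_x: "ennreal (gamma_density n z * ln (1 + \<alpha>*z/c)) = (\<integral>\<^sup>+ x. f x z \<partial>lborel)" for z
  proof (cases "z < 0")
    case False
    have b: "\<alpha>*z/c \<ge> 0" using False a c by simp
    have iff: "x < \<alpha>*z/c \<longleftrightarrow> x*c/\<alpha> < z" for x using a c by (simp add: field_simps)
    have "ennreal (gamma_density n z * ln (1 + \<alpha>*z/c))
        = ennreal (gamma_density n z) * (\<integral>\<^sup>+ x. ennreal (indicator {0..} x / (1+x) * (if x*c/\<alpha> < z then 1 else 0)) \<partial>lborel)"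
      unfolding ennreal_mult'[OF gamma_density_nonneg] ln_one_plus_integral[OF b] iff ..
    also have "\<dots> = (\<integral>\<^sup>+ x. ennreal (gamma_density n z) * ennreal (indicator {0..} x / (1+x) * (if x*c/\<alpha> < z then 1 else 0)) \<partial>lborel)"
      by (rule nn_integral_cmult[symmetric]) measurable
    also have "\<dots> = (\<integral>\<^sup>+ x. f x z \<partial>lborel)"
      unfolding f_def by (intro nn_integral_cong) (simp add: ennreal_mult'[symmetric])
    finally show ?thesis .
  qed (simp add: f_def gamma_density_alt)
  have inner_z: "(\<integral>\<^sup>+ z. f x z \<partial>lborel) = ennreal (indicator {0..} x / (1+x) * gamma_ccdf n (x*c/\<alpha>))" for x
  proof (cases "x < 0")
    case False
    have t: "x*c/\<alpha> \<ge> 0" using False a c by simp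
    have "(\<integral>\<^sup>+ z. f x z \<partial>lborel) = (\<integral>\<^sup>+ z. ennreal (1/(1+x)) * (ennreal (gamma_density n z) * indicator {x*c/\<alpha><..} z) \<partial>lborel)"
      unfolding f_def using False
      by (intro nn_integral_cong) (auto simp: ennreal_mult'[symmetric] split: split_indicator)
    also have "\<dots> = ennreal (1/(1+x)) * ennreal (gamma_ccdf n (x*c/\<alpha>))"
      by (subst nn_integral_cmult) (auto simp: gamma_ccdf_integral[OF n t])
    also have "\<dots> = ennreal (indicator {0..} x / (1+x) * gamma_ccdf n (x*c/\<alpha>))"
      using False by (simp add: ennreal_mult'[symmetric])
    finally show ?thesis .
  qed (simp add: f_def)
  have "(\<integral>\<^sup>+ z. ennreal (gamma_density n z * ln (1 + \<alpha>*z/c)) \<partial>lborel) = (\<integral>\<^sup>+ z. \<integral>\<^sup>+ x. f x z \<partial>lborel \<partial>lborel)"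
    by (simp add: inner_x)
  also have "\<dots> = (\<integral>\<^sup>+ x. \<integral>\<^sup>+ z. f x z \<partial>lborel \<partial>lborel)"
    by (rule lborel_pair.Fubini'[OF fm])
  finally show ?thesis by (simp add: inner_z)
qed

text \<open>Conditional tail of \<open>X\<close> given \<open>Y\<close>: with \<open>s = x/\<alpha>\<close>,
  \<open>P(\<alpha>z/(1+Y) > x) = gamma_ccdf n (s(1+Y))\<close>, and the binomial expansion of \<open>(1+Y)^i\<close>
  separates the dependence on \<open>Y\<close> into terms \<open>Y^l e^(-sY)\<close>.\<close>
lemma gamma_ccdf_expand:
  fixes s Y :: real
  shows "gamma_ccdf n (s*(1+Y)) = (\<Sum>i<n. \<Sum>l\<le>i. (s^i * exp (-s) / fact i * of_nat (i choose l)) * (Y^l * exp (-s*Y)))"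
  unfolding gamma_ccdf_def
proof (intro sum.cong refl)
  fix i
  have "(1+Y)^i = (\<Sum>l\<le>i. of_nat (i choose l) * Y^l)"
    using binomial_ring[of Y 1 i] by (simp add: add.commute)
  moreover have "exp (-(s*(1+Y))) = exp (-s) * exp (-s*Y)" by (simp add: exp_add[symmetric] algebra_simps)
  ultimately show "(s*(1+Y))^i * exp (-(s*(1+Y))) / fact i = (\<Sum>l\<le>i. (s^i * exp (-s) / fact i * of_nat (i choose l)) * (Y^l * exp (-s*Y)))"
    by (simp add: power_mult_distrib sum_distrib_left sum_distrib_right sum_divide_distrib ac_simps)
qed

text \<open>The complementary CDF \<open>P(X > x)\<close> of the SINR \<open>X = \<alpha>z/(1 + \<delta>\<^sub>1y\<^sub>1 + \<delta>\<^sub>2y\<^sub>2)\<close>, in terms of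
  the moments \<open>E[Y^l e^(-sY)]\<close> at \<open>s = x/\<alpha>\<close>.\<close>
definition sinr_ccdf :: "nat \<Rightarrow> nat \<Rightarrow> real \<Rightarrow> real \<Rightarrow> real \<Rightarrow> real \<Rightarrow> real" where
  "sinr_ccdf n L d1 d2 \<alpha> x =
     (\<Sum>i<n. \<Sum>l\<le>i. ((x/\<alpha>)^i * exp (-(x/\<alpha>)) / fact i * of_nat (i choose l)) * mixed_moment L d1 d2 l (x/\<alpha>))"

lemma sinr_ccdf_nonneg:
  assumes "x \<ge> 0" "\<alpha> > 0" "d1 > 0" "d2 > 0"
  shows "0 \<le> sinr_ccdf n L d1 d2 \<alpha> x"
  unfolding sinr_ccdf_def using assms by (intro sum_nonneg mult_nonneg_nonneg mixed_moment_nonneg) auto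

lemma nn_integral_triangular_sum:
  assumes "\<And>l. f l \<in> borel_measurable M"
  shows "(\<integral>\<^sup>+ y. (\<Sum>i<n. \<Sum>l\<le>i. c i l * f l y) \<partial>M) = (\<Sum>i<n. \<Sum>l\<le>i. c i l * (\<integral>\<^sup>+ y. f l y \<partial>M))"
  using assms by (simp add: nn_integral_sum nn_integral_cmult)

lemma gamma_pair_ccdf:
  assumes x: "x \<ge> 0" and a: "\<alpha> > 0" and L: "1 \<le> L" and d: "d1 > 0" "d2 > 0"
  shows "(\<integral>\<^sup>+ y2. \<integral>\<^sup>+ y1. ennreal (gamma_density L y2 * gamma_density L y1 * gamma_ccdf n (x*(1 + d1*y1 + d2*y2)/\<alpha>)) \<partial>lborel \<partial>lborel)
       = ennreal (sinr_ccdf n L d1 d2 \<alpha> x)"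
proof -
  define s where "s = x/\<alpha>"
  have s: "s \<ge> 0" using x a by (simp add: s_def)
  define C where "C i l = s^i * exp (-s) / fact i * of_nat (i choose l)" for i l :: nat
  have C: "0 \<le> C i l" for i l using s unfolding C_def by simp
  define G where "G l y1 y2 = gamma_density L y2 * gamma_density L y1 * ((d1*y1 + d2*y2)^l * exp (-s*(d1*y1 + d2*y2)))"
    for l y1 y2
  have G: "0 \<le> G l y1 y2" for l y1 y2
    unfolding G_def using d by (cases "y1 < 0"; cases "y2 < 0") (auto simp: gamma_density_alt)
  have expand: "ennreal (gamma_density L y2 * gamma_density L y1 * gamma_ccdf n (x*(1 + d1*y1 + d2*y2)/\<alpha>))
      = (\<Sum>i<n. \<Sum>l\<le>i. ennreal (C i l) * ennreal (G l y1 y2))" for y1 y2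
  proof -
    have "x*(1 + d1*y1 + d2*y2)/\<alpha> = s*(1 + (d1*y1 + d2*y2))"
      unfolding s_def by (simp add: algebra_simps add_divide_distrib)
    then have "gamma_density L y2 * gamma_density L y1 * gamma_ccdf n (x*(1 + d1*y1 + d2*y2)/\<alpha>)
       = gamma_density L y2 * gamma_density L y1 * gamma_ccdf n (s*(1 + (d1*y1 + d2*y2)))" by simp
    also have "\<dots> = (\<Sum>i<n. \<Sum>l\<le>i. C i l * G l y1 y2)"
      unfolding gamma_ccdf_expand C_def G_def by (simp add: sum_distrib_left ac_simps)
    finally have "gamma_density L y2 * gamma_density L y1 * gamma_ccdf n (x*(1 + d1*y1 + d2*y2)/\<alpha>)
       = (\<Sum>i<n. \<Sum>l\<le>i. C i l * G l y1 y2)" .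
    also have "ennreal \<dots> = (\<Sum>i<n. \<Sum>l\<le>i. ennreal (C i l * G l y1 y2))"
      by (simp add: sum_ennreal C G sum_nonneg)
    finally show ?thesis by (simp add: ennreal_mult C G)
  qed
  have "(\<integral>\<^sup>+ y2. \<integral>\<^sup>+ y1. ennreal (gamma_density L y2 * gamma_density L y1 * gamma_ccdf n (x*(1 + d1*y1 + d2*y2)/\<alpha>)) \<partial>lborel \<partial>lborel)
     = (\<Sum>i<n. \<Sum>l\<le>i. ennreal (C i l) * (\<integral>\<^sup>+ y2. \<integral>\<^sup>+ y1. ennreal (G l y1 y2) \<partial>lborel \<partial>lborel))"
    unfolding expand G_def
    by (simp add: nn_integral_triangular_sum)
  also have "\<dots> = (\<Sum>i<n. \<Sum>l\<le>i. ennreal (C i l * mixed_moment L d1 d2 l s))"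
    unfolding G_def gamma_mixed_moment[OF s d L] by (simp add: ennreal_mult C mixed_moment_nonneg[OF s d])
  also have "\<dots> = ennreal (sinr_ccdf n L d1 d2 \<alpha> x)"
    unfolding sinr_ccdf_def C_def s_def using s d
    by (simp add: sum_ennreal sum_nonneg mixed_moment_nonneg s_def)
  finally show ?thesis .
qed

lemma weighted_expected_log:
  assumes a: "\<alpha> > 0" and n: "1 \<le> n" and d: "d1 > 0" "d2 > 0"
  shows "ennreal (gamma_density L y2) * (ennreal (gamma_density L y1) *
           (\<integral>\<^sup>+ z. ennreal (gamma_density n z) * ennreal (ln (1 + \<alpha>*z/(1 + d1*y1 + d2*y2))) \<partial>lborel))
       = (\<integral>\<^sup>+ x. ennreal (indicator {0..} x / (1+x) *
           (gamma_density L y2 * gamma_density L y1 * gamma_ccdf n (x*(1 + d1*y1 + d2*y2)/\<alpha>))) \<partial>lborel)"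
proof (cases "y1 < 0 \<or> y2 < 0")
  case False
  let ?g = "gamma_density L y2 * gamma_density L y1"
  have c: "1 + d1*y1 + d2*y2 > 0" using False d by (simp add: add_pos_nonneg)
  have "(\<integral>\<^sup>+ z. ennreal (gamma_density n z) * ennreal (ln (1 + \<alpha>*z/(1 + d1*y1 + d2*y2))) \<partial>lborel)
      = (\<integral>\<^sup>+ z. ennreal (gamma_density n z * ln (1 + \<alpha>*z/(1 + d1*y1 + d2*y2))) \<partial>lborel)"
    by (intro nn_integral_cong) (simp add: ennreal_mult')
  also have "\<dots> = (\<integral>\<^sup>+ x. ennreal (indicator {0..} x / (1+x) * gamma_ccdf n (x*(1 + d1*y1 + d2*y2)/\<alpha>)) \<partial>lborel)"
    by (rule gamma_expected_log[OF c a n])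
  finally have "ennreal (gamma_density L y2) * (ennreal (gamma_density L y1) *
           (\<integral>\<^sup>+ z. ennreal (gamma_density n z) * ennreal (ln (1 + \<alpha>*z/(1 + d1*y1 + d2*y2))) \<partial>lborel))
      = ennreal ?g * (\<integral>\<^sup>+ x. ennreal (indicator {0..} x / (1+x) * gamma_ccdf n (x*(1 + d1*y1 + d2*y2)/\<alpha>)) \<partial>lborel)"
    by (simp add: ennreal_mult' mult.assoc)
  also have "\<dots> = (\<integral>\<^sup>+ x. ennreal ?g * ennreal (indicator {0..} x / (1+x) * gamma_ccdf n (x*(1 + d1*y1 + d2*y2)/\<alpha>)) \<partial>lborel)"
    by (rule nn_integral_cmult[symmetric]) (unfold gamma_ccdf_def, measurable)
  finally show ?thesis by (simp add: ennreal_mult'[symmetric] ac_simps)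
qed (auto simp: gamma_density_alt)

lemma iterated_expected_log:
  assumes a: "\<alpha> > 0" and L: "1 \<le> L" and n: "1 \<le> n" and d: "d1 > 0" "d2 > 0"
  shows "(\<integral>\<^sup>+ y2. ennreal (gamma_density L y2) * (\<integral>\<^sup>+ y1. ennreal (gamma_density L y1) *
           (\<integral>\<^sup>+ z. ennreal (gamma_density n z) * ennreal (ln (1 + \<alpha>*z/(1 + d1*y1 + d2*y2))) \<partial>lborel) \<partial>lborel) \<partial>lborel)
       = (\<integral>\<^sup>+ x. ennreal (indicator {0..} x / (1+x) * sinr_ccdf n L d1 d2 \<alpha> x) \<partial>lborel)"
proof -
  define F where "F x y1 y2 = ennreal (indicator {0..} x / (1+x) *
      (gamma_density L y2 * gamma_density L y1 * gamma_ccdf n (x*(1 + d1*y1 + d2*y2)/\<alpha>)))" for x y1 y2 :: real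
  have [measurable]: "(\<lambda>(x, y1). F x y1 y2) \<in> borel_measurable (lborel \<Otimes>\<^sub>M lborel)" for y2
    unfolding F_def gamma_ccdf_def by measurable
  have [measurable]: "(\<lambda>p. F (fst (fst p)) (snd p) (snd (fst p))) \<in> borel_measurable ((lborel \<Otimes>\<^sub>M lborel) \<Otimes>\<^sub>M lborel)"
    unfolding F_def gamma_ccdf_def by measurable
  have inner_y: "(\<integral>\<^sup>+ y2. \<integral>\<^sup>+ y1. F x y1 y2 \<partial>lborel \<partial>lborel) = ennreal (indicator {0..} x / (1+x) * sinr_ccdf n L d1 d2 \<alpha> x)"
    for x
  proof (cases "x < 0")
    case False
    have "(\<integral>\<^sup>+ y2. \<integral>\<^sup>+ y1. F x y1 y2 \<partial>lborel \<partial>lborel)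
       = (\<integral>\<^sup>+ y2. \<integral>\<^sup>+ y1. ennreal (1/(1+x)) * ennreal (gamma_density L y2 * gamma_density L y1 * gamma_ccdf n (x*(1 + d1*y1 + d2*y2)/\<alpha>)) \<partial>lborel \<partial>lborel)"
      unfolding F_def using False by (intro nn_integral_cong) (simp add: ennreal_mult'[symmetric])
    also have "\<dots> = ennreal (1/(1+x)) * ennreal (sinr_ccdf n L d1 d2 \<alpha> x)"
      using gamma_pair_ccdf[of x \<alpha> L d1 d2 n] False a L d
      by (simp add: nn_integral_cmult gamma_ccdf_def)
    also have "\<dots> = ennreal (indicator {0..} x / (1+x) * sinr_ccdf n L d1 d2 \<alpha> x)"
      using False by (simp add: ennreal_mult'[symmetric])
    finally show ?thesis .
  qed (simp add: F_def)
  have "(\<integral>\<^sup>+ y2. ennreal (gamma_density L y2) * (\<integral>\<^sup>+ y1. ennreal (gamma_density L y1) *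
           (\<integral>\<^sup>+ z. ennreal (gamma_density n z) * ennreal (ln (1 + \<alpha>*z/(1 + d1*y1 + d2*y2))) \<partial>lborel) \<partial>lborel) \<partial>lborel)
      = (\<integral>\<^sup>+ y2. \<integral>\<^sup>+ y1. \<integral>\<^sup>+ x. F x y1 y2 \<partial>lborel \<partial>lborel \<partial>lborel)"
    unfolding F_def weighted_expected_log[OF a n d, symmetric]
    by (intro nn_integral_cong nn_integral_cmult[symmetric]) measurable
  also have "\<dots> = (\<integral>\<^sup>+ y2. \<integral>\<^sup>+ x. \<integral>\<^sup>+ y1. F x y1 y2 \<partial>lborel \<partial>lborel \<partial>lborel)"
    by (intro nn_integral_cong lborel_pair.Fubini') measurable
  also have "\<dots> = (\<integral>\<^sup>+ x. \<integral>\<^sup>+ y2. \<integral>\<^sup>+ y1. F x y1 y2 \<partial>lborel \<partial>lborel \<partial>lborel)"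
    by (rule lborel_pair.Fubini'[where f="\<lambda>x y2. \<integral>\<^sup>+ y1. F x y1 y2 \<partial>lborel"]) measurable
  finally show ?thesis by (simp add: inner_y)
qed

lemma nn_integral_PiM_3:
  fixes D :: "nat \<Rightarrow> real measure" and h :: "real \<Rightarrow> real \<Rightarrow> real \<Rightarrow> ennreal"
  assumes "product_sigma_finite D"
    and sets_D [measurable_cong]: "\<And>i. sets (D i) = sets borel"
    and h: "(\<lambda>(a, b, c). h a b c) \<in> borel_measurable (borel \<Otimes>\<^sub>M borel \<Otimes>\<^sub>M borel)"
  shows "(\<integral>\<^sup>+ v. h (v 0) (v 1) (v 2) \<partial>(PiM {0,1,2} D))
       = (\<integral>\<^sup>+ y2. \<integral>\<^sup>+ y1. \<integral>\<^sup>+ z. h z y1 y2 \<partial>D 0 \<partial>D 1 \<partial>D 2)"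
proof -
  interpret product_sigma_finite D by fact
  have [measurable (raw)]: "(\<lambda>x. h (f x) (g x) (k x)) \<in> borel_measurable N"
    if [measurable]: "f \<in> borel_measurable N" "g \<in> borel_measurable N" "k \<in> borel_measurable N"
    for N :: "'x measure" and f g k
    using measurable_compose[of "\<lambda>x. (f x, g x, k x)" N, OF _ h] by simp
  interpret D0: sigma_finite_measure "D 0" by (rule sigma_finite_measures)
  interpret D1: sigma_finite_measure "D 1" by (rule sigma_finite_measures)
  have "(\<integral>\<^sup>+ v. h (v 0) (v 1) (v 2) \<partial>(PiM (insert 0 {1,2}) D))
      = (\<integral>\<^sup>+ v. (\<integral>\<^sup>+ z. h z (v 1) (v 2) \<partial>D 0) \<partial>PiM {1,2} D)"
    by (subst product_nn_integral_insert) (auto, measurable)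
  also have "\<dots> = (\<integral>\<^sup>+ w. (\<integral>\<^sup>+ y1. (\<integral>\<^sup>+ z. h z y1 (w 2) \<partial>D 0) \<partial>D 1) \<partial>PiM {2} D)"
    by (subst product_nn_integral_insert) (auto, measurable)
  also have "\<dots> = (\<integral>\<^sup>+ y2. \<integral>\<^sup>+ y1. \<integral>\<^sup>+ z. h z y1 y2 \<partial>D 0 \<partial>D 1 \<partial>D 2)"
    by (rule product_nn_integral_singleton) measurable
  finally show ?thesis by simp
qed

lemma nn_integral_indep_vars_3:
  fixes X :: "nat \<Rightarrow> 'w \<Rightarrow> real" and f :: "nat \<Rightarrow> real \<Rightarrow> ennreal"
    and h :: "real \<Rightarrow> real \<Rightarrow> real \<Rightarrow> ennreal"
  assumes "prob_space M"
    and indep: "prob_space.indep_vars M (\<lambda>_. borel) X {0, 1, 2}"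
    and dist: "\<And>i. distributed M lborel (X i) (f i)"
    and h: "(\<lambda>(a, b, c). h a b c) \<in> borel_measurable (borel \<Otimes>\<^sub>M borel \<Otimes>\<^sub>M borel)"
  shows "(\<integral>\<^sup>+ \<omega>. h (X 0 \<omega>) (X 1 \<omega>) (X 2 \<omega>) \<partial>M)
       = (\<integral>\<^sup>+ y2. f 2 y2 * (\<integral>\<^sup>+ y1. f 1 y1 * (\<integral>\<^sup>+ z. f 0 z * h z y1 y2 \<partial>lborel) \<partial>lborel) \<partial>lborel)"
proof -
  interpret prob_space M by fact
  define D where "D i = density lborel (f i)" for i
  have rv: "random_variable borel (X i)" for i
    using distributed_measurable[OF dist[of i]] by simp
  have dD: "distr M borel (X i) = D i" for i
  proof -
    have "distr M borel (X i) = distr M lborel (X i)" by (rule distr_cong) auto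
    also have "\<dots> = D i" unfolding D_def by (rule distributed_distr_eq_density[OF dist])
    finally show ?thesis .
  qed
  have sD [measurable_cong]: "sets (D i) = sets borel" for i unfolding D_def by simp
  have "product_sigma_finite D"
  proof (rule product_sigma_finite.intro)
    fix i
    have "prob_space (D i)" unfolding dD[symmetric] by (rule prob_space_distr) (rule rv)
    then show "sigma_finite_measure (D i)" by (rule prob_space_imp_sigma_finite)
  qed
  have [measurable (raw)]: "(\<lambda>x. h (a x) (b x) (c x)) \<in> borel_measurable N"
    if [measurable]: "a \<in> borel_measurable N" "b \<in> borel_measurable N" "c \<in> borel_measurable N"
    for N :: "'x measure" and a b c
    using measurable_compose[of "\<lambda>x. (a x, b x, c x)" N, OF _ h] by simp
  have Xm: "(\<lambda>\<omega>. \<lambda>i\<in>{0,1,2}. X i \<omega>) \<in> measurable M (PiM {0,1,2} (\<lambda>_. borel))"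
    using rv by (intro measurable_restrict) auto
  have "distr M (PiM {0,1,2} (\<lambda>_. borel)) (\<lambda>\<omega>. \<lambda>i\<in>{0,1,2}. X i \<omega>) = PiM {0,1,2} D"
    using indep rv indep_vars_iff_distr_eq_PiM[where I="{0,1,2}" and M'="\<lambda>_. borel" and X=X] dD by simp
  moreover have "(\<lambda>v. h (v 0) (v 1) (v 2)) \<in> borel_measurable (PiM {0,1,2} D)" by measurable
  ultimately have "(\<integral>\<^sup>+ \<omega>. h (X 0 \<omega>) (X 1 \<omega>) (X 2 \<omega>) \<partial>M) = (\<integral>\<^sup>+ v. h (v 0) (v 1) (v 2) \<partial>PiM {0,1,2} D)"
    using nn_integral_distr[OF Xm, of "\<lambda>v. h (v 0) (v 1) (v 2)"] by simp
  also have "\<dots> = (\<integral>\<^sup>+ y2. \<integral>\<^sup>+ y1. \<integral>\<^sup>+ z. h z y1 y2 \<partial>D 0 \<partial>D 1 \<partial>D 2)"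
    by (rule nn_integral_PiM_3[OF \<open>product_sigma_finite D\<close> sD h])
  also have "\<dots> = (\<integral>\<^sup>+ y2. f 2 y2 * (\<integral>\<^sup>+ y1. f 1 y1 * (\<integral>\<^sup>+ z. f 0 z * h z y1 y2 \<partial>lborel) \<partial>lborel) \<partial>lborel)"
    unfolding D_def using dist[THEN distributed_borel_measurable]
    by (simp add: nn_integral_density)
  finally show ?thesis .
qed

lemma ccdf_term_as_I1_integrand:
  fixes x \<alpha> \<delta> c :: real
  assumes x: "x > 0" and a: "\<alpha> > 0" and d: "\<delta> > 0" and li: "l \<le> i"
  shows "((x/\<alpha>)^i * exp (-(x/\<alpha>)) / fact i * of_nat (i choose l)) * (c * fact (l+k) / (x/\<alpha> + 1/\<delta>)^(l+k+1)) / (1+x)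
       = c * fact (l+k) / (fact l * fact (i-l)) * \<alpha> powi (int l + int k - int i + 1)
         * (x^i * exp (-(1/\<alpha>)*x) / ((x + \<alpha>/\<delta>)^(l+k+1) * (x+1)))"
proof -
  have b: "(of_nat (i choose l) :: real) = fact i / (fact l * fact (i-l))"
    using binomial_fact[OF li] by simp
  have e1: "x/\<alpha> + 1/\<delta> = (x + \<alpha>/\<delta>)/\<alpha>" using a d by (simp add: field_simps)
  have p: "\<alpha> powi (int l + int k - int i + 1) = \<alpha>^(l+k+1) / \<alpha>^i"
  proof -
    have "int l + int k - int i + 1 = int (l+k+1) - int i" by simp
    then have "\<alpha> powi (int l + int k - int i + 1) = \<alpha> powi (int (l+k+1) - int i)" by (simp only:)
    also have "\<dots> = \<alpha> powi int (l+k+1) / \<alpha> powi int i" by (rule power_int_diff) (use a in simp)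
    finally show ?thesis by (simp only: power_int_of_nat)
  qed
  have e2: "exp (-(1/\<alpha>)*x) = exp (-(x/\<alpha>))" by simp
  have pos: "x + \<alpha>/\<delta> > 0" using x a d by (simp add: add_pos_pos)
  show ?thesis unfolding b e1 p e2 power_divide
    using a pos x by (simp add: field_simps)
qed

text \<open>The closed form of the CDF of \<open>X\<close> from the paper, divided by \<open>1 + x\<close>:
  \<open>mixed_moment_eq_pf_moment\<close> turns each moment into partial fractions.\<close>
lemma sinr_ccdf_expansion:
  fixes \<alpha> \<delta>1 \<delta>2 x :: real
  assumes x: "x > 0" and a: "\<alpha> > 0" and L: "1 \<le> L" and d: "\<delta>1 > 0" "\<delta>2 > 0" "\<delta>1 \<noteq> \<delta>2" and n: "1 \<le> n"
  shows "sinr_ccdf n L \<delta>1 \<delta>2 \<alpha> x / (1+x)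
    = (\<Sum>i = 0..n - 1. \<Sum>j \<in> {1, 2}. \<Sum>k = 0..L - 1. \<Sum>l = 0..i.
            coef L \<delta>1 \<delta>2 j k * fact (l + k) / (fact l * fact (i - l))
            * \<alpha> powi (int l + int k - int i + 1)
            * (x^i * exp (-(1/\<alpha>)*x) / ((x + \<alpha> / delta \<delta>1 \<delta>2 j)^(l+k+1) * (x+1))))"
proof -
  define s where "s = x/\<alpha>"
  have s: "s > 0" using x a by (simp add: s_def)
  define A where "A i l = s^i * exp (-s) / fact i * of_nat (i choose l)" for i l :: nat
  have "sinr_ccdf n L \<delta>1 \<delta>2 \<alpha> x / (1+x) = (\<Sum>i<n. \<Sum>l\<le>i. A i l * pf_moment L \<delta>1 \<delta>2 l s) / (1+x)"
    unfolding sinr_ccdf_def s_def[symmetric] A_def[symmetric] mixed_moment_eq_pf_moment[OF L d s] ..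
  also have "\<dots> = (\<Sum>i<n. \<Sum>l\<le>i. \<Sum>j\<in>{1,2}. \<Sum>k=0..L-1.
      A i l * (coef L \<delta>1 \<delta>2 j k * fact (l+k) / (s + 1/delta \<delta>1 \<delta>2 j)^(l+k+1)) / (1+x))"
    unfolding pf_moment_def by (simp only: sum_distrib_left sum_divide_distrib)
  also have "\<dots> = (\<Sum>i<n. \<Sum>l\<le>i. \<Sum>j\<in>{1,2}. \<Sum>k=0..L-1. coef L \<delta>1 \<delta>2 j k * fact (l + k) / (fact l * fact (i - l))
            * \<alpha> powi (int l + int k - int i + 1)
            * (x^i * exp (-(1/\<alpha>)*x) / ((x + \<alpha> / delta \<delta>1 \<delta>2 j)^(l+k+1) * (x+1))))"
  proof (intro sum.cong refl)
    fix i l j k :: nat assume "l \<in> {..i}"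
    moreover have "delta \<delta>1 \<delta>2 j > 0" using d by (simp add: delta_def)
    ultimately show "A i l * (coef L \<delta>1 \<delta>2 j k * fact (l+k) / (s + 1/delta \<delta>1 \<delta>2 j)^(l+k+1)) / (1+x) =
      coef L \<delta>1 \<delta>2 j k * fact (l + k) / (fact l * fact (i - l)) * \<alpha> powi (int l + int k - int i + 1)
            * (x^i * exp (-(1/\<alpha>)*x) / ((x + \<alpha> / delta \<delta>1 \<delta>2 j)^(l+k+1) * (x+1)))"
      unfolding A_def s_def using ccdf_term_as_I1_integrand[OF x a] by simp
  qed
  also have "\<dots> = (\<Sum>i<n. \<Sum>j\<in>{1,2}. \<Sum>k=0..L-1. \<Sum>l\<le>i. coef L \<delta>1 \<delta>2 j k * fact (l + k) / (fact l * fact (i - l))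
            * \<alpha> powi (int l + int k - int i + 1)
            * (x^i * exp (-(1/\<alpha>)*x) / ((x + \<alpha> / delta \<delta>1 \<delta>2 j)^(l+k+1) * (x+1))))"
    by (rule sum.cong[OF refl], subst sum.swap, rule sum.cong[OF refl], rule sum.swap)
  also have "\<dots> = (\<Sum>i = 0..n - 1. \<Sum>j \<in> {1, 2}. \<Sum>k = 0..L - 1. \<Sum>l = 0..i.
            coef L \<delta>1 \<delta>2 j k * fact (l + k) / (fact l * fact (i - l))
            * \<alpha> powi (int l + int k - int i + 1)
            * (x^i * exp (-(1/\<alpha>)*x) / ((x + \<alpha> / delta \<delta>1 \<delta>2 j)^(l+k+1) * (x+1))))"
  proof -
    have "{..<n} = {0..n-1}" "\<And>i::nat. {..i} = {0..i}" using n by auto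
    then show ?thesis by (simp only:)
  qed
  finally show ?thesis .
qed

text \<open>The integrand of \<open>I\<^sub>1(a,b,m,p)\<close> is integrable on \<open>(0,\<infinity>)\<close> for \<open>a, b > 0\<close>: it is
  dominated by \<open>x^m e^(-ax) / b^p\<close>, a multiple of an Erlang moment.\<close>
lemma I1_integrable:
  fixes a b :: real
  assumes a: "a > 0" and b: "b > 0"
  shows "set_integrable lborel {0<..} (\<lambda>x. x^m * exp (- a * x) / ((x + b)^p * (x+1)))"
  unfolding set_integrable_def
proof (rule Bochner_Integration.integrable_bound)
  show "integrable lborel (\<lambda>x. (1 / (a * b^p)) * (erlang_density 0 a x * x^m))"
  proof (intro integrable_mult_right integrableI_nonneg)
    show "(\<integral>\<^sup>+ x. ennreal (erlang_density 0 a x * x^m) \<partial>lborel) < \<infinity>"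
      using nn_integral_erlang_ith_moment[OF a, of 0 m] by simp
  qed (use a in \<open>auto simp: erlang_density_def intro!: AE_I2\<close>)
  show "AE x in lborel. norm (indicator {0<..} x *\<^sub>R (x^m * exp (- a * x) / ((x + b)^p * (x+1))))
      \<le> norm ((1 / (a * b^p)) * (erlang_density 0 a x * x^m))"
  proof (intro AE_I2)
    fix x :: real
    show "norm (indicator {0<..} x *\<^sub>R (x^m * exp (- a * x) / ((x + b)^p * (x+1))))
      \<le> norm ((1 / (a * b^p)) * (erlang_density 0 a x * x^m))"
    proof (cases "x > 0")
      case True
      have "b^p \<le> (x+b)^p" using True b by (intro power_mono) auto
      also have "\<dots> \<le> (x+b)^p * (x+1)" using True b by (simp add: mult_le_cancel_left1)
      finally have "x^m * exp (- a * x) / ((x + b)^p * (x+1)) \<le> x^m * exp (- a * x) / b^p"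
        using b True by (intro divide_left_mono) auto
      then show ?thesis using True a b by (simp add: erlang_density_def field_simps)
    qed simp
  qed
qed measurable

lemma integral_sinr_ccdf:
  assumes a: "\<alpha> > 0" and L: "1 \<le> L" and d: "\<delta>1 > 0" "\<delta>2 > 0" "\<delta>1 \<noteq> \<delta>2" and n: "1 \<le> n"
  shows "(\<integral>x. indicator {0..} x / (1+x) * sinr_ccdf n L \<delta>1 \<delta>2 \<alpha> x \<partial>lborel)
       = (\<Sum>i = 0..n - 1. \<Sum>j \<in> {1, 2}. \<Sum>k = 0..L - 1. \<Sum>l = 0..i.
            coef L \<delta>1 \<delta>2 j k * fact (l + k) / (fact l * fact (i - l))
            * \<alpha> powi (int l + int k - int i + 1)
            * I1 (1 / \<alpha>) (\<alpha> / delta \<delta>1 \<delta>2 j) i (l + k + 1))"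
proof -
  define c where "c i j k l = coef L \<delta>1 \<delta>2 j k * fact (l + k) / (fact l * fact (i - l)) * \<alpha> powi (int l + int k - int i + 1)"
    for i j k l :: nat
  define g where "g i j k l x = indicator {0<..} x *\<^sub>R (x^i * exp (- (1/\<alpha>) * x) / ((x + \<alpha> / delta \<delta>1 \<delta>2 j)^(l+k+1) * (x+1)))"
    for i j k l :: nat and x :: real
  have g: "integrable lborel (g i j k l)" for i j k l
    using I1_integrable[of "1/\<alpha>" "\<alpha> / delta \<delta>1 \<delta>2 j" i "l+k+1"] a d
    unfolding set_integrable_def g_def by (simp add: delta_def)
  have "AE x in lborel. indicator {0..} x / (1+x) * sinr_ccdf n L \<delta>1 \<delta>2 \<alpha> x
      = (\<Sum>i = 0..n - 1. \<Sum>j \<in> {1, 2}. \<Sum>k = 0..L - 1. \<Sum>l = 0..i. c i j k l * g i j k l x)"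
    using AE_lborel_singleton[of 0]
  proof eventually_elim
    case (elim x)
    show ?case
    proof (cases "x > 0")
      case True
      then show ?thesis unfolding c_def g_def
        using sinr_ccdf_expansion[OF True a L d n] by (simp add: mult.assoc)
    qed (use elim in \<open>simp add: g_def\<close>)
  qed
  then have "(\<integral>x. indicator {0..} x / (1+x) * sinr_ccdf n L \<delta>1 \<delta>2 \<alpha> x \<partial>lborel)
      = (\<integral>x. (\<Sum>i = 0..n - 1. \<Sum>j \<in> {1, 2}. \<Sum>k = 0..L - 1. \<Sum>l = 0..i. c i j k l * g i j k l x) \<partial>lborel)"
    by (rule integral_cong_AE[rotated 2]) (unfold sinr_ccdf_def mixed_moment_def laplace_moment_def c_def g_def, measurable)
  also have "\<dots> = (\<Sum>i = 0..n - 1. \<Sum>j \<in> {1, 2}. \<Sum>k = 0..L - 1. \<Sum>l = 0..i. c i j k l * integral\<^sup>L lborel (g i j k l))"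
    by (simp add: g integral_sum integrable_sum)
  finally show ?thesis
    unfolding c_def g_def I1_def set_lebesgue_integral_def by simp
qed

lemma gamma_AE_nonneg:
  assumes "distributed M lborel X (gamma_density k)"
  shows "AE \<omega> in M. 0 \<le> X \<omega>"
proof -
  have "AE x in density lborel (\<lambda>x. ennreal (gamma_density k x)). 0 \<le> x"
    by (subst AE_density) (auto simp: gamma_density_alt split: if_splits)
  then have "AE x in distr M lborel X. 0 \<le> x"
    unfolding distributed_distr_eq_density[OF assms] .
  then show ?thesis by (rule AE_distrD[OF distributed_measurable[OF assms]])
qed

lemma expected_log_sinr_nn:
  fixes M :: "'w measure" and z y1 y2 :: "'w \<Rightarrow> real"
  assumes "prob_space M" and L: "1 \<le> L" and n: "1 \<le> n"
    and a: "\<alpha> > 0" and d: "\<delta>1 > 0" "\<delta>2 > 0"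
    and indep: "prob_space.indep_vars M (\<lambda>_. borel) (\<lambda>i. if i = (0::nat) then z else if i = 1 then y1 else y2) {0, 1, 2}"
    and "distributed M lborel z (gamma_density n)"
    and "distributed M lborel y1 (gamma_density L)"
    and "distributed M lborel y2 (gamma_density L)"
  shows "(\<integral>\<^sup>+ \<omega>. ennreal (ln (1 + \<alpha> * z \<omega> / (1 + \<delta>1 * y1 \<omega> + \<delta>2 * y2 \<omega>))) \<partial>M)
       = (\<integral>\<^sup>+ x. ennreal (indicator {0..} x / (1+x) * sinr_ccdf n L \<delta>1 \<delta>2 \<alpha> x) \<partial>lborel)"
proof -
  define h where "h a b c = ennreal (ln (1 + \<alpha> * a / (1 + \<delta>1 * b + \<delta>2 * c)))" for a b c
  define f where "f i x = ennreal (gamma_density (if i = 0 then n else L) x)" for i :: nat and x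
  have "(\<lambda>(a, b, c). h a b c) \<in> borel_measurable (borel \<Otimes>\<^sub>M borel \<Otimes>\<^sub>M borel)"
    unfolding h_def by measurable
  moreover have "distributed M lborel ((\<lambda>i. if i = (0::nat) then z else if i = 1 then y1 else y2) i) (f i)" for i
    unfolding f_def using assms by auto
  ultimately have "(\<integral>\<^sup>+ \<omega>. h (z \<omega>) (y1 \<omega>) (y2 \<omega>) \<partial>M)
      = (\<integral>\<^sup>+ y2. f 2 y2 * (\<integral>\<^sup>+ y1. f 1 y1 * (\<integral>\<^sup>+ z. f 0 z * h z y1 y2 \<partial>lborel) \<partial>lborel) \<partial>lborel)"
    using nn_integral_indep_vars_3[OF \<open>prob_space M\<close> indep] by simp
  then show ?thesis
    unfolding h_def f_def using iterated_expected_log[OF a L n d] by simp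
qed

theorem mainTheorem1:
  fixes M :: "'w measure" and N L :: nat and \<alpha> \<delta>1 \<delta>2 :: real
    and z y1 y2 :: "'w \<Rightarrow> real"
  assumes "prob_space M"
    and "1 \<le> L" and "L \<le> N - 1"
    and "\<alpha> > 0" and "\<delta>1 > 0" and "\<delta>2 > 0" and "\<delta>1 \<noteq> \<delta>2"
    and "prob_space.indep_vars M (\<lambda>_. borel) (\<lambda>i. if i = (0::nat) then z else if i = 1 then y1 else y2) {0, 1, 2}"
    and "distributed M lborel z (gamma_density (N - L))"
    and "distributed M lborel y1 (gamma_density L)"
    and "distributed M lborel y2 (gamma_density L)"
  shows "prob_space.expectation M (\<lambda>\<omega>. ln (1 + \<alpha> * z \<omega> / (1 + \<delta>1 * y1 \<omega> + \<delta>2 * y2 \<omega>)))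
       = (\<Sum>i = 0..N - L - 1. \<Sum>j \<in> {1, 2}. \<Sum>k = 0..L - 1. \<Sum>l = 0..i.
            coef L \<delta>1 \<delta>2 j k * fact (l + k) / (fact l * fact (i - l))
            * \<alpha> powi (int l + int k - int i + 1)
            * I1 (1 / \<alpha>) (\<alpha> / delta \<delta>1 \<delta>2 j) i (l + k + 1))"
proof -
  interpret prob_space M by fact
  have n: "1 \<le> N - L" using assms(2,3) by simp
  define f where "f \<omega> = ln (1 + \<alpha> * z \<omega> / (1 + \<delta>1 * y1 \<omega> + \<delta>2 * y2 \<omega>))" for \<omega>
  define F where "F x = indicator {0..} x / (1+x) * sinr_ccdf (N-L) L \<delta>1 \<delta>2 \<alpha> x" for x :: real
  have [measurable]: "z \<in> borel_measurable M" "y1 \<in> borel_measurable M" "y2 \<in> borel_measurable M"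
    using assms(9-11)[THEN distributed_measurable] by simp_all
  have "AE \<omega> in M. 0 \<le> f \<omega>"
    using assms(9-11)[THEN gamma_AE_nonneg]
  proof eventually_elim
    case (elim \<omega>)
    then have "0 \<le> \<alpha> * z \<omega> / (1 + \<delta>1 * y1 \<omega> + \<delta>2 * y2 \<omega>)" using assms(4-6) by simp
    then show ?case unfolding f_def by simp
  qed
  then have "expectation f = enn2real (\<integral>\<^sup>+ \<omega>. ennreal (f \<omega>) \<partial>M)"
    by (rule integral_eq_nn_integral[rotated]) (simp add: f_def)
  also have "\<dots> = enn2real (\<integral>\<^sup>+ x. ennreal (F x) \<partial>lborel)"
    unfolding f_def F_def using expected_log_sinr_nn[OF assms(1,2) n assms(4-6,8-11)] by simp
  also have "\<dots> = integral\<^sup>L lborel F"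
    using sinr_ccdf_nonneg[of _ \<alpha> \<delta>1 \<delta>2] assms(4-6) unfolding F_def
    by (intro integral_eq_nn_integral[symmetric])
       (auto simp: sinr_ccdf_def mixed_moment_def laplace_moment_def split: split_indicator)
  finally show ?thesis
    unfolding f_def F_def integral_sinr_ccdf[OF assms(4,2,5-7) n] .
qed

end
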